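(* Let $\gamma\in(0,1)$ and consider the following networked Markov game $MG$ with 4 agents $\mathcal N=\{1,2,3,4\}$ on the path graph with edges $\{(1,2),(2,3),(3,4)\}$. Each agent has local state space $\mathcal S_i=\{s_b,s_g\}$ and local action space $\mathcal A_i=\{a_b,a_g\}$. All agents start in $s_b$ at time $0$. Transitions are deterministic: $s_1(t+1)=s_g$ if $a_1(t)=a_g$ and $s_1(t+1)=s_b$ if $a_1(t)=a_b$; for $i\in\{2,3,4\}$, $s_i(t+1)=s_{i-1}(t)$. Rewards: $r_1=r_2=r_3\equiv0$, and $r_4(s_4,a_4)=1$ if $(s_4,a_4)=(s_g,a_g)$ and $0$ otherwise. Policies are local stationary policies $\xi_i:\mathcal S_i\to\Delta(\mathcal A_i)$. Then $MG$ is a $1$-NMPG, but it is not a Markov potential game.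
   Context: With $J_i(\xi)=\sum_{t\ge0}\gamma^t\mathbb E_\xi[r_i(s(t),a(t))]$, $\Xi_i$ the local policies of agent $i$ and $\Xi=\prod_i\Xi_i$: the game is a $\kappa_G$-NMPG if there are functions $\Phi_i:\Xi\to\mathbb R$, $i\in\mathcal N$, such that for every $i\in\mathcal N$, every $j$ with graph distance $\mathrm{dist}(i,j)\le\kappa_G$, all $\xi_j,\xi_j'\in\Xi_j$ and $\xi_{-j}\in\Xi_{-j}$: $J_j(\xi_j',\xi_{-j})-J_j(\xi_j,\xi_{-j})=\Phi_i(\xi_j',\xi_{-j})-\Phi_i(\xi_j,\xi_{-j})$. The game is a Markov potential game (MPG) if there is a single $\Phi:\Xi\to\mathbb R$ with $J_i(\xi_i',\xi_{-i})-J_i(\xi_i,\xi_{-i})=\Phi(\xi_i',\xi_{-i})-\Phi(\xi_i,\xi_{-i})$ for all $i$, $\xi_i,\xi_i'\in\Xi_i$, $\xi_{-i}\in\Xi_{-i}$. *)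

theory Defs
  imports "HOL-Probability.Probability"
begin

text \<open>Agents are of type 'i, local policies of type 'p; the agent set is N and the set of
  local policies of agent i is Xi i.  J i xi is the value of agent i under joint policy xi.\<close>

definition is_NMPG ::
  "'i set \<Rightarrow> ('i \<Rightarrow> 'p set) \<Rightarrow> ('i \<Rightarrow> 'i \<Rightarrow> nat) \<Rightarrow> nat \<Rightarrow> ('i \<Rightarrow> ('i \<Rightarrow> 'p) \<Rightarrow> real) \<Rightarrow> bool"
  where
  "is_NMPG N Xi d \<kappa> J \<longleftrightarrow>
     (\<exists>\<Phi> :: 'i \<Rightarrow> ('i \<Rightarrow> 'p) \<Rightarrow> real.
        \<forall>i\<in>N. \<forall>j\<in>N. d i j \<le> \<kappa> \<longrightarrow>
          (\<forall>\<xi>\<in>PiE N Xi. \<forall>p\<in>Xi j.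
             J j (\<xi>(j := p)) - J j \<xi> = \<Phi> i (\<xi>(j := p)) - \<Phi> i \<xi>))"

definition is_MPG ::
  "'i set \<Rightarrow> ('i \<Rightarrow> 'p set) \<Rightarrow> ('i \<Rightarrow> ('i \<Rightarrow> 'p) \<Rightarrow> real) \<Rightarrow> bool"
  where
  "is_MPG N Xi J \<longleftrightarrow>
     (\<exists>\<Phi> :: ('i \<Rightarrow> 'p) \<Rightarrow> real.
        \<forall>i\<in>N. \<forall>\<xi>\<in>PiE N Xi. \<forall>p\<in>Xi i.
             J i (\<xi>(i := p)) - J i \<xi> = \<Phi> (\<xi>(i := p)) - \<Phi> \<xi>)"

definition gdist :: "('a \<Rightarrow> 'a \<Rightarrow> bool) \<Rightarrow> 'a \<Rightarrow> 'a \<Rightarrow> nat" where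
  "gdist E i j = (LEAST n. ((\<lambda>x y. E x y \<or> E y x) ^^ n) i j)"

datatype lstate = Sb | Sg
datatype lact = Ab | Ag

type_synonym jstate = "nat \<Rightarrow> lstate"
type_synonym jact = "nat \<Rightarrow> lact"
type_synonym lpolicy = "lstate \<Rightarrow> lact pmf"
type_synonym jpolicy = "nat \<Rightarrow> lpolicy"

definition agents :: "nat set" where "agents = {1,2,3,4}"

definition pathE :: "nat \<Rightarrow> nat \<Rightarrow> bool" where
  "pathE i j \<longleftrightarrow> (i, j) \<in> {(1,2),(2,3),(3,4)}"

definition init_state :: jstate where "init_state = (\<lambda>_. Sb)"

definition trans :: "jstate \<Rightarrow> jact \<Rightarrow> jstate" where
  "trans s a = (\<lambda>i. if i = 1 then (if a 1 = Ag then Sg else Sb)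
                    else if i \<in> {2,3,4} then s (i - 1) else s i)"

definition reward :: "nat \<Rightarrow> jstate \<Rightarrow> jact \<Rightarrow> real" where
  "reward i s a = (if i = 4 \<and> s 4 = Sg \<and> a 4 = Ag then 1 else 0)"

definition act_dist :: "jpolicy \<Rightarrow> jstate \<Rightarrow> jact pmf" where
  "act_dist \<xi> s = Pi_pmf agents Ab (\<lambda>i. \<xi> i (s i))"

fun state_dist :: "jpolicy \<Rightarrow> nat \<Rightarrow> jstate pmf" where
  "state_dist \<xi> 0 = return_pmf init_state"
| "state_dist \<xi> (Suc t) = bind_pmf (state_dist \<xi> t) (\<lambda>s. map_pmf (trans s) (act_dist \<xi> s))"

definition sa_dist :: "jpolicy \<Rightarrow> nat \<Rightarrow> (jstate \<times> jact) pmf" where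
  "sa_dist \<xi> t = bind_pmf (state_dist \<xi> t) (\<lambda>s. map_pmf (\<lambda>a. (s, a)) (act_dist \<xi> s))"

definition exp_reward :: "nat \<Rightarrow> jpolicy \<Rightarrow> nat \<Rightarrow> real" where
  "exp_reward i \<xi> t = measure_pmf.expectation (sa_dist \<xi> t) (\<lambda>(s, a). reward i s a)"

definition J :: "real \<Rightarrow> nat \<Rightarrow> jpolicy \<Rightarrow> real" where
  "J \<gamma> i \<xi> = (\<Sum>t. \<gamma> ^ t * exp_reward i \<xi> t)"

end

theory Submission
  imports Defs
begin

text \<open>Only agent 1's action influences the dynamics, and only agent 4 is ever rewarded, so
  agent 4's value depends on the policies of agents 1 and 4 alone and all other values vanish.
  Hence the local potentials \<open>\<Phi>\<^sub>i = J\<^sub>4\<close> for \<open>i \<in> {3,4}\<close> and \<open>\<Phi>\<^sub>i = 0\<close> for \<open>i \<in> {1,2}\<close> witness the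
  1-NMPG property: agents within distance 1 of 3 or 4 never include agent 1, and those within
  distance 1 of 1 or 2 never include agent 4.  A global potential is impossible: in any MPG,
  the value changes along the two paths of unilateral deviations from one joint policy to
  another balance, but switching agents 1 and 4 from \<open>a\<^sub>b\<close> to \<open>a\<^sub>g\<close> gains agent 4 a positive value
  only when agent 1 switches first.\<close>

lemma is_MPG_deviation_cycle:
  assumes "is_MPG N Xi V" "i \<in> N" "j \<in> N" "i \<noteq> j"
    and "\<xi> \<in> PiE N Xi" "p \<in> Xi i" "q \<in> Xi j"
  shows "(V i (\<xi>(i := p)) - V i \<xi>) + (V j (\<xi>(i := p, j := q)) - V j (\<xi>(i := p)))
       = (V j (\<xi>(j := q)) - V j \<xi>) + (V i (\<xi>(j := q, i := p)) - V i (\<xi>(j := q)))"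
proof -
  obtain \<Phi> where \<Phi>: "\<And>k \<eta> r. k \<in> N \<Longrightarrow> \<eta> \<in> PiE N Xi \<Longrightarrow> r \<in> Xi k \<Longrightarrow>
      V k (\<eta>(k := r)) - V k \<eta> = \<Phi> (\<eta>(k := r)) - \<Phi> \<eta>"
    using assms(1) unfolding is_MPG_def by blast
  have "\<xi>(i := p) \<in> PiE N Xi" "\<xi>(j := q) \<in> PiE N Xi"
    using assms by (auto intro: PiE_fun_upd)
  moreover have "\<xi>(j := q, i := p) = \<xi>(i := p, j := q)"
    using assms(4) by (simp add: fun_upd_twist)
  ultimately show ?thesis
    using \<Phi>[of i \<xi> p] \<Phi>[of j \<xi> q] \<Phi>[of j "\<xi>(i := p)" q] \<Phi>[of i "\<xi>(j := q)" p] assms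
    by simp
qed

lemma two_le_gdist:
  assumes "((\<lambda>x y. E x y \<or> E y x) ^^ n) i j" "i \<noteq> j" "\<not> E i j" "\<not> E j i"
  shows "2 \<le> gdist E i j"
proof -
  let ?R = "\<lambda>x y. E x y \<or> E y x"
  have walk: "(?R ^^ gdist E i j) i j"
    unfolding gdist_def using assms(1) by (rule LeastI)
  have "gdist E i j \<noteq> 0"
  proof
    assume "gdist E i j = 0"
    with walk assms(2) show False by simp
  qed
  moreover have "gdist E i j \<noteq> 1"
  proof
    assume "gdist E i j = 1"
    with walk assms(3,4) show False by (simp add: eq_OO)
  qed
  ultimately show ?thesis by linarith
qed

lemma gdist_pathE_far:
  shows "2 \<le> gdist pathE 1 4" "2 \<le> gdist pathE 2 4"
    and "2 \<le> gdist pathE 3 1" "2 \<le> gdist pathE 4 1"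
proof -
  show "2 \<le> gdist pathE 1 4" "2 \<le> gdist pathE 4 1"
    by (rule two_le_gdist[where n = 3]; auto simp: pathE_def numeral_3_eq_3 OO_def)+
  show "2 \<le> gdist pathE 2 4" "2 \<le> gdist pathE 3 1"
    by (rule two_le_gdist[where n = 2]; auto simp: pathE_def numeral_2_eq_2 OO_def)+
qed

definition next_state :: "jstate \<Rightarrow> lact \<Rightarrow> jstate" where
  "next_state s x = trans s (\<lambda>_. x)"

lemma trans_eq_next_state: "trans s a = next_state s (a 1)"
  unfolding next_state_def trans_def by auto

lemma map_pmf_component_act_dist:
  "i \<in> agents \<Longrightarrow> map_pmf (\<lambda>a. a i) (act_dist \<xi> s) = \<xi> i (s i)"
  unfolding act_dist_def by (simp add: Pi_pmf_component agents_def)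

lemma map_pmf_trans_act_dist:
  "map_pmf (trans s) (act_dist \<xi> s) = map_pmf (next_state s) (\<xi> 1 (s 1))"
proof -
  have "trans s = next_state s \<circ> (\<lambda>a. a 1)"
    by (simp add: fun_eq_iff trans_eq_next_state)
  then show ?thesis
    by (simp add: pmf.map_comp[symmetric] map_pmf_component_act_dist agents_def)
qed

lemma state_dist_cong: "\<xi> 1 = \<xi>' 1 \<Longrightarrow> state_dist \<xi> t = state_dist \<xi>' t"
  by (induction t) (simp_all add: map_pmf_trans_act_dist)

lemma state_dist_const_action:
  assumes "\<xi> 1 = (\<lambda>_. return_pmf x)"
  shows "state_dist \<xi> t = return_pmf (((\<lambda>s. next_state s x) ^^ t) init_state)"
  by (induction t) (simp_all add: assms assms[simplified] map_pmf_trans_act_dist bind_return_pmf)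

lemma exp_reward_4:
  "exp_reward 4 \<xi> t = measure_pmf.expectation
     (bind_pmf (state_dist \<xi> t) (\<lambda>s. map_pmf (Pair s) (\<xi> 4 (s 4))))
     (\<lambda>(s, x). if s 4 = Sg \<and> x = Ag then 1 else 0)"
  (is "_ = measure_pmf.expectation ?M ?r")
proof -
  let ?\<pi> = "\<lambda>(s :: jstate, a :: jact). (s, a 4)"
  have "(\<lambda>(s, a). reward 4 s a) = ?r \<circ> ?\<pi>"
    by (auto simp: reward_def fun_eq_iff)
  then have "exp_reward 4 \<xi> t = measure_pmf.expectation (map_pmf ?\<pi> (sa_dist \<xi> t)) ?r"
    by (simp add: exp_reward_def integral_map_pmf comp_def)
  also have "map_pmf ?\<pi> (sa_dist \<xi> t) = ?M"
    by (simp add: sa_dist_def map_bind_pmf pmf.map_comp o_def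
        map_pmf_component_act_dist[of 4, simplified agents_def, simplified, symmetric])
  finally show ?thesis .
qed

lemma J_eq_0_if_ne_4:
  assumes "i \<noteq> 4"
  shows "J \<gamma> i \<xi> = 0"
proof -
  have "(\<lambda>(s, a). reward i s a) = (\<lambda>_. 0)"
    using assms by (auto simp: reward_def)
  then show ?thesis by (simp add: J_def exp_reward_def)
qed

lemma J_4_cong: "\<xi> 1 = \<xi>' 1 \<Longrightarrow> \<xi> 4 = \<xi>' 4 \<Longrightarrow> J \<gamma> 4 \<xi> = J \<gamma> 4 \<xi>'"
  unfolding J_def by (simp add: exp_reward_4 state_dist_cong[of \<xi> \<xi>'])

lemma next_state_bad_iterate: "((\<lambda>s. next_state s Ab) ^^ t) init_state = init_state"
proof (induction t)
  case (Suc t)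
  then have "((\<lambda>s. next_state s Ab) ^^ Suc t) init_state = next_state init_state Ab"
    by simp
  then show ?case
    by (simp add: next_state_def trans_def init_state_def fun_eq_iff)
qed simp

lemma next_state_good_iterate:
  "((\<lambda>s. next_state s Ag) ^^ t) init_state = (\<lambda>i. if i \<in> {1..4} \<and> i \<le> t then Sg else Sb)"
proof (induction t)
  case (Suc t)
  then have "((\<lambda>s. next_state s Ag) ^^ Suc t) init_state
      = next_state (\<lambda>i. if i \<in> {1..4} \<and> i \<le> t then Sg else Sb) Ag"
    by simp
  then show ?case
    by (auto simp: next_state_def trans_def fun_eq_iff)
qed (simp add: init_state_def fun_eq_iff)

lemma J_4_eq_0_if_bad_1:
  assumes "\<xi> 1 = (\<lambda>_. return_pmf Ab)"
  shows "J \<gamma> 4 \<xi> = 0"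
proof -
  have "state_dist \<xi> t = return_pmf init_state" for t
    using state_dist_const_action[of \<xi> Ab, OF assms] by (simp add: next_state_bad_iterate)
  then show ?thesis
    by (simp add: J_def exp_reward_4 bind_return_pmf init_state_def)
qed

lemma J_4_eq_0_if_bad_4:
  "\<xi> 4 = (\<lambda>_. return_pmf Ab) \<Longrightarrow> J \<gamma> 4 \<xi> = 0"
  by (simp add: J_def exp_reward_4 map_pmf_def[symmetric])

lemma J_4_pos_if_good_1_4:
  assumes "0 < \<gamma>" "\<gamma> < 1" "\<xi> 1 = (\<lambda>_. return_pmf Ag)" "\<xi> 4 = (\<lambda>_. return_pmf Ag)"
  shows "0 < J \<gamma> 4 \<xi>"
proof -
  have reward: "exp_reward 4 \<xi> t = (if 4 \<le> t then 1 else 0)" for t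
    using assms(3,4)
    by (simp add: exp_reward_4 state_dist_const_action next_state_good_iterate bind_return_pmf)
  have "summable (\<lambda>t. \<gamma> ^ t * exp_reward 4 \<xi> t)"
    using assms(1,2)
    by (intro summable_comparison_test[OF _ summable_geometric[of \<gamma>]]) (auto simp: reward)
  moreover have "\<And>t. 0 \<le> \<gamma> ^ t * exp_reward 4 \<xi> t"
    using assms(1) by (simp add: reward)
  moreover have "0 < \<gamma> ^ 4 * exp_reward 4 \<xi> 4"
    using assms(1) by (simp add: reward)
  ultimately show ?thesis
    unfolding J_def by (rule suminf_pos2)
qed

lemma gdist_pathE_le_1_cases:
  assumes "i \<in> agents" "gdist pathE i j \<le> 1"
  shows "i \<in> {3, 4} \<and> j \<noteq> 1 \<or> i \<in> {1, 2} \<and> j \<noteq> 4"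
proof (cases "i \<in> {3, 4}")
  case True
  then show ?thesis
    using assms(2) gdist_pathE_far(3,4) by force
next
  case False
  with assms(1) have "i = 1 \<or> i = 2"
    by (auto simp: agents_def)
  then show ?thesis
    using assms(2) gdist_pathE_far(1,2) by force
qed

lemma J_is_NMPG: "is_NMPG agents (\<lambda>_. UNIV) (gdist pathE) 1 (J \<gamma>)"
  unfolding is_NMPG_def
proof (intro exI[of _ "\<lambda>i \<xi>. if i \<in> {3, 4} then J \<gamma> 4 \<xi> else 0"] ballI impI)
  fix i j \<xi> p
  assume "i \<in> agents" "gdist pathE i j \<le> 1"
  then have "i \<in> {3, 4} \<and> j \<noteq> 1 \<or> i \<in> {1, 2} \<and> j \<noteq> 4"
    by (rule gdist_pathE_le_1_cases)
  moreover have "J \<gamma> 4 (\<xi>(j := p)) = J \<gamma> 4 \<xi>" if "j \<noteq> 1" "j \<noteq> 4"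
    using that by (intro J_4_cong) simp_all
  ultimately show "J \<gamma> j (\<xi>(j := p)) - J \<gamma> j \<xi>
      = (if i \<in> {3, 4} then J \<gamma> 4 (\<xi>(j := p)) else 0) - (if i \<in> {3, 4} then J \<gamma> 4 \<xi> else 0)"
    by (cases "j = 4") (auto simp: J_eq_0_if_ne_4)
qed

lemma J_not_MPG:
  assumes "0 < \<gamma>" "\<gamma> < 1"
  shows "\<not> is_MPG agents (\<lambda>_. UNIV) (J \<gamma>)"
proof
  assume MPG: "is_MPG agents (\<lambda>_. UNIV) (J \<gamma>)"
  define bad :: jpolicy where "bad = restrict (\<lambda>_ _. return_pmf Ab) agents"
  define good :: lpolicy where "good = (\<lambda>_. return_pmf Ag)"
  have "0 < J \<gamma> 4 (bad(1 := good, 4 := good))"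
    by (rule J_4_pos_if_good_1_4[OF assms]) (simp_all add: good_def)
  moreover have "J \<gamma> 4 (bad(1 := good)) = 0"
    by (rule J_4_eq_0_if_bad_4) (simp add: bad_def agents_def)
  moreover have "J \<gamma> 4 (bad(4 := good)) = 0" "J \<gamma> 4 bad = 0"
    by (rule J_4_eq_0_if_bad_1, simp add: bad_def agents_def)+
  moreover have "bad \<in> PiE agents (\<lambda>_. UNIV)"
    by (simp add: bad_def)
  ultimately show False
    using is_MPG_deviation_cycle[OF MPG, of 1 4 bad good good]
    by (simp add: J_eq_0_if_ne_4 agents_def)
qed

theorem mainTheorem4:
  fixes \<gamma> :: real
  assumes "0 < \<gamma>" and "\<gamma> < 1"
  shows "is_NMPG agents (\<lambda>_. UNIV) (gdist pathE) 1 (J \<gamma>) \<and>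
         \<not> is_MPG agents (\<lambda>_. UNIV) (J \<gamma>)"
  using J_is_NMPG J_not_MPG[OF assms] by blast

end
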